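(* For any American option $\xi$ and any mixed stopping time $\chi\in\mathcal{X}$, \[ \{-x\in\mathbb{R}^d:\exists y\in\Phi,\ (y,\chi)\in\Phi^{\mathrm{bg}}(\xi),\ x=y_0\}=\{-x\in\mathbb{R}^d:\exists z\in\Psi^{\mathrm{a}}(-\xi_\chi),\ x=z_0\}. \]
   Context: Finite filtered probability space $(\Omega,\mathcal{F},\mathbb{P};(\mathcal{F}_t)_{t=0}^T)$, $\mathcal{F}_0$ trivial, $\mathcal{F}_T=2^\Omega$, $\mathbb{P}(\{\omega\})>0$. $\mathcal{L}_t$: $\mathcal{F}_t$-measurable $\mathbb{R}^d$-valued random variables. $d$ assets, $\mathcal{F}_t$-measurable exchange rates $\pi^{jk}_t>0$, $\pi^{jj}_t=1$. Solvency cone $\mathcal{K}_t$: $x\in\mathcal{L}_t$ with $x(\omega)$ in the convex cone generated by $e^1,\ldots,e^d$ and $\pi^{jk}_t(\omega)e^j-e^k$ for all $\omega$. Trading strategies $\Phi$: $y=(y_t)_{t=0}^{T+1}$, $y_0\in\mathbb{R}^d$, $y_t\in\mathcal{L}_{t-1}$ ($t=1,\ldots,T$), $y_{T+1}=0$. Mixed stopping times $\mathcal{X}$: adapted $[0,1]$-valued $\chi$ with $\sum_{t=0}^T\chi_t=1$; $\xi_\chi=\sum_{t=0}^T\chi_t\xi_t\in\mathcal{L}_T$. American option: adapted $\mathbb{R}^d$-valued $\xi=(\xi_t)_{t=0}^T$. $\Phi^{\mathrm{bg}}(\xi)$: pairs $(y,\chi)\in\Phi\times\mathcal{X}$ with $y_t+\chi_t\xi_t-y_{t+1}\in\mathcal{K}_t$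 for each $t=0,\ldots,T$. For $\zeta\in\mathcal{L}_T$, $\Psi^{\mathrm{a}}(\zeta)$ is the set of $y\in\Phi$ with $y_t-y_{t+1}\in\mathcal{K}_t$ for $t=0,\ldots,T-1$ and $y_T-\zeta\in\mathcal{K}_T$. Standing assumption: no arbitrage (no $y\in\Phi$ with $y_0=0$, $y_t-y_{t+1}\in\mathcal{K}_t$ for $t<T$ and $y_T-x\in\mathcal{K}_T$ for a nonzero componentwise non-negative $x\in\mathcal{L}_T$). *)

theory Defs
  imports "HOL-Analysis.Analysis"
begin

text \<open>Vectors of d assets are elements of real ^ 'd.\<close>

definition finite_filtered_space :: "('a::finite \<Rightarrow> real) \<Rightarrow> (nat \<Rightarrow> 'a set set) \<Rightarrow> nat \<Rightarrow> bool" where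
  "finite_filtered_space P F T \<longleftrightarrow>
     (\<forall>\<omega>. P \<omega> > 0) \<and> (\<Sum>\<omega>\<in>UNIV. P \<omega>) = 1 \<and>
     (\<forall>t\<le>T. sigma_algebra UNIV (F t)) \<and>
     (\<forall>t<T. F t \<subseteq> F (Suc t)) \<and>
     F 0 = {{}, UNIV} \<and> F T = Pow UNIV"

definition meas :: "(nat \<Rightarrow> 'a set set) \<Rightarrow> nat \<Rightarrow> ('a \<Rightarrow> 'b::topological_space) \<Rightarrow> bool" where
  "meas F t f \<longleftrightarrow> f \<in> measurable (sigma UNIV (F t)) borel"

definition exchange_rates :: "(nat \<Rightarrow> 'a set set) \<Rightarrow> nat \<Rightarrow> (nat \<Rightarrow> 'd \<Rightarrow> 'd \<Rightarrow> 'a \<Rightarrow> real) \<Rightarrow> bool" where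
  "exchange_rates F T \<pi> \<longleftrightarrow>
     (\<forall>t\<le>T. \<forall>j k. meas F t (\<pi> t j k) \<and> (\<forall>\<omega>. \<pi> t j k \<omega> > 0)) \<and>
     (\<forall>t\<le>T. \<forall>j \<omega>. \<pi> t j j \<omega> = 1)"

definition cone_gens :: "(nat \<Rightarrow> 'd \<Rightarrow> 'd \<Rightarrow> 'a \<Rightarrow> real) \<Rightarrow> nat \<Rightarrow> 'a \<Rightarrow> (real ^ 'd::finite) set" where
  "cone_gens \<pi> t \<omega> = {axis j 1 | j. True} \<union> {\<pi> t j k \<omega> *\<^sub>R axis j 1 - axis k 1 | j k. True}"

definition in_K :: "(nat \<Rightarrow> 'a set set) \<Rightarrow> (nat \<Rightarrow> 'd \<Rightarrow> 'd \<Rightarrow> 'a \<Rightarrow> real) \<Rightarrow> nat \<Rightarrow> ('a \<Rightarrow> real ^ 'd::finite) \<Rightarrow> bool" where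
  "in_K F \<pi> t x \<longleftrightarrow> meas F t x \<and> (\<forall>\<omega>. x \<omega> \<in> convex_cone hull (cone_gens \<pi> t \<omega>))"

definition strategies :: "(nat \<Rightarrow> 'a set set) \<Rightarrow> nat \<Rightarrow> (nat \<Rightarrow> 'a \<Rightarrow> real ^ 'd::finite) set" where
  "strategies F T = {y. (\<exists>v. \<forall>\<omega>. y 0 \<omega> = v) \<and> (\<forall>t\<in>{1..T}. meas F (t - 1) (y t)) \<and>
                        (\<forall>t>T. \<forall>\<omega>. y t \<omega> = 0)}"

definition mixed_stopping_times :: "(nat \<Rightarrow> 'a set set) \<Rightarrow> nat \<Rightarrow> (nat \<Rightarrow> 'a \<Rightarrow> real) set" where
  "mixed_stopping_times F T = {c. (\<forall>t\<le>T. meas F t (c t) \<and> (\<forall>\<omega>. 0 \<le> c t \<omega> \<and> c t \<omega> \<le> 1)) \<and>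
                                   (\<forall>\<omega>. (\<Sum>t\<le>T. c t \<omega>) = 1)}"

definition stopped_payoff :: "nat \<Rightarrow> (nat \<Rightarrow> 'a \<Rightarrow> real) \<Rightarrow> (nat \<Rightarrow> 'a \<Rightarrow> real ^ 'd::finite) \<Rightarrow> 'a \<Rightarrow> real ^ 'd" where
  "stopped_payoff T c \<xi> = (\<lambda>\<omega>. \<Sum>t\<le>T. c t \<omega> *\<^sub>R \<xi> t \<omega>)"

definition american_option :: "(nat \<Rightarrow> 'a set set) \<Rightarrow> nat \<Rightarrow> (nat \<Rightarrow> 'a \<Rightarrow> real ^ 'd::finite) \<Rightarrow> bool" where
  "american_option F T \<xi> \<longleftrightarrow> (\<forall>t\<le>T. meas F t (\<xi> t))"

definition Phi_bg :: "(nat \<Rightarrow> 'a set set) \<Rightarrow> (nat \<Rightarrow> 'd \<Rightarrow> 'd \<Rightarrow> 'a \<Rightarrow> real) \<Rightarrow> nat \<Rightarrow>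
    (nat \<Rightarrow> 'a \<Rightarrow> real ^ 'd::finite) \<Rightarrow> ((nat \<Rightarrow> 'a \<Rightarrow> real ^ 'd) \<times> (nat \<Rightarrow> 'a \<Rightarrow> real)) set" where
  "Phi_bg F \<pi> T \<xi> = {(y, c). y \<in> strategies F T \<and> c \<in> mixed_stopping_times F T \<and>
      (\<forall>t\<le>T. in_K F \<pi> t (\<lambda>\<omega>. y t \<omega> + c t \<omega> *\<^sub>R \<xi> t \<omega> - y (Suc t) \<omega>))}"

definition Psi_a :: "(nat \<Rightarrow> 'a set set) \<Rightarrow> (nat \<Rightarrow> 'd \<Rightarrow> 'd \<Rightarrow> 'a \<Rightarrow> real) \<Rightarrow> nat \<Rightarrow>
    ('a \<Rightarrow> real ^ 'd::finite) \<Rightarrow> (nat \<Rightarrow> 'a \<Rightarrow> real ^ 'd) set" where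
  "Psi_a F \<pi> T \<zeta> = {y. y \<in> strategies F T \<and>
      (\<forall>t<T. in_K F \<pi> t (\<lambda>\<omega>. y t \<omega> - y (Suc t) \<omega>)) \<and>
      in_K F \<pi> T (\<lambda>\<omega>. y T \<omega> - \<zeta> \<omega>)}"

definition no_arbitrage :: "(nat \<Rightarrow> 'a set set) \<Rightarrow> (nat \<Rightarrow> 'd::finite \<Rightarrow> 'd \<Rightarrow> 'a \<Rightarrow> real) \<Rightarrow> nat \<Rightarrow> bool" where
  "no_arbitrage F \<pi> T \<longleftrightarrow>
     \<not> (\<exists>(y :: nat \<Rightarrow> 'a \<Rightarrow> real ^ 'd) x. y \<in> Psi_a F \<pi> T x \<and> (\<forall>\<omega>. y 0 \<omega> = 0) \<and>
          meas F T x \<and> (\<forall>\<omega> j. 0 \<le> x \<omega> $ j) \<and> x \<noteq> (\<lambda>\<omega>. 0))"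

end

theory Submission
  imports Defs
begin

text \<open>Let \<open>S t = (\<Sum>s<t. \<chi> s *\<^sub>R \<xi> s)\<close> be the payoff delivered strictly before time \<open>t\<close>.
  Subtracting \<open>S\<close> turns a strategy \<open>y\<close> with \<open>(y, \<chi>) \<in> \<Phi>\<^sup>b\<^sup>g(\<xi>)\<close> into a strategy in
  \<open>\<Psi>\<^sup>a(-\<xi>\<^sub>\<chi>)\<close>, and adding it back inverts this: \<open>S t\<close> is \<open>\<F>\<^sub>t\<^sub>-\<^sub>1\<close>-measurable, so predictability
  is preserved; the increments \<open>(y t - S t) - (y (t+1) - S (t+1)) = y t + \<chi> t \<xi> t - y (t+1)\<close>
  agree; and \<open>S T + \<chi> T \<xi> T = \<xi>\<^sub>\<chi>\<close> matches the terminal conditions. Since \<open>S 0 = 0\<close>, the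
  initial endowments coincide.\<close>

lemma meas_mono:
  assumes "F s \<subseteq> F t" "meas F s f"
  shows "meas F t f"
proof -
  have "measurable (sigma UNIV (F s)) (borel :: 'b::topological_space measure)
        \<subseteq> measurable (sigma UNIV (F t)) borel"
    by (rule measurable_mono) (auto simp: sets_measure_of space_measure_of_conv
        intro!: sigma_sets_subseteq assms(1))
  then show ?thesis using assms(2) unfolding meas_def by blast
qed

lemma meas_add:
  fixes f g :: "'a \<Rightarrow> real ^ 'd::finite"
  shows "meas F t f \<Longrightarrow> meas F t g \<Longrightarrow> meas F t (\<lambda>\<omega>. f \<omega> + g \<omega>)"
  unfolding meas_def by auto

lemma meas_uminus:
  fixes f :: "'a \<Rightarrow> real ^ 'd::finite"
  shows "meas F t f \<Longrightarrow> meas F t (\<lambda>\<omega>. - f \<omega>)"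
  unfolding meas_def by auto

lemma filtration_mono:
  assumes "\<forall>t<T. F t \<subseteq> F (Suc t)" "s \<le> t" "t \<le> T"
  shows "F s \<subseteq> F t"
  using assms(2,3)
proof (induction t rule: dec_induct)
  case (step n)
  then have "F s \<subseteq> F n" by simp
  also have "F n \<subseteq> F (Suc n)" using assms(1) step.prems by simp
  finally show ?case .
qed simp

definition payoff_before :: "(nat \<Rightarrow> 'a \<Rightarrow> real) \<Rightarrow> (nat \<Rightarrow> 'a \<Rightarrow> real ^ 'd::finite) \<Rightarrow>
    nat \<Rightarrow> 'a \<Rightarrow> real ^ 'd" where
  "payoff_before c \<xi> t \<omega> = (\<Sum>s<t. c s \<omega> *\<^sub>R \<xi> s \<omega>)"

lemma payoff_before_0 [simp]: "payoff_before c \<xi> 0 \<omega> = 0"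
  by (simp add: payoff_before_def)

lemma payoff_before_Suc: "payoff_before c \<xi> (Suc t) \<omega> = payoff_before c \<xi> t \<omega> + c t \<omega> *\<^sub>R \<xi> t \<omega>"
  by (simp add: payoff_before_def)

lemma stopped_payoff_eq_payoff_before:
  "stopped_payoff T c \<xi> \<omega> = payoff_before c \<xi> T \<omega> + c T \<omega> *\<^sub>R \<xi> T \<omega>"
  by (simp add: stopped_payoff_def payoff_before_Suc[symmetric])
     (simp add: payoff_before_def lessThan_Suc_atMost)

lemma payoff_before_predictable:
  assumes "\<forall>t<T. F t \<subseteq> F (Suc t)" "american_option F T \<xi>" "c \<in> mixed_stopping_times F T"
    and "t \<in> {1..T}"
  shows "meas F (t - 1) (payoff_before c \<xi> t)"
  unfolding meas_def payoff_before_def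
proof (rule borel_measurable_sum)
  fix s assume "s \<in> {..<t}"
  then have s: "s \<le> t - 1" "t - 1 \<le> T" using assms(4) by auto
  have "meas F s (c s)" "meas F s (\<xi> s)"
    using assms(2,3) s unfolding mixed_stopping_times_def american_option_def by auto
  then have "meas F (t - 1) (c s)" "meas F (t - 1) (\<xi> s)"
    using meas_mono[OF filtration_mono[OF assms(1) s]] by auto
  then show "(\<lambda>\<omega>. c s \<omega> *\<^sub>R \<xi> s \<omega>) \<in> borel_measurable (sigma UNIV (F (t - 1)))"
    unfolding meas_def by (rule borel_measurable_scaleR)
qed

text \<open>The cut-off at \<open>T\<close> keeps the shifted process zero after the horizon.\<close>

lemma strategies_shift:
  assumes "y \<in> strategies F T" "\<And>\<omega>. S 0 \<omega> = 0" "\<And>t. t \<in> {1..T} \<Longrightarrow> meas F (t - 1) (S t)"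
  shows "(\<lambda>t \<omega>. if t \<le> T then y t \<omega> + S t \<omega> else 0) \<in> strategies F T"
  unfolding strategies_def
proof (intro CollectI conjI ballI allI impI)
  show "\<exists>v. \<forall>\<omega>. (if 0 \<le> T then y 0 \<omega> + S 0 \<omega> else 0) = v"
    using assms(1,2) by (simp add: strategies_def)
  fix t assume t: "t \<in> {1..T}"
  then have "meas F (t - 1) (\<lambda>\<omega>. y t \<omega> + S t \<omega>)"
    using assms(1) assms(3)[OF t] unfolding strategies_def by (intro meas_add) auto
  then show "meas F (t - 1) (\<lambda>\<omega>. if t \<le> T then y t \<omega> + S t \<omega> else 0)"
    using t by simp
qed simp

context
  fixes F :: "nat \<Rightarrow> 'a set set" and T :: nat and \<pi> :: "nat \<Rightarrow> 'd::finite \<Rightarrow> 'd \<Rightarrow> 'a \<Rightarrow> real"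
    and \<xi> :: "nat \<Rightarrow> 'a \<Rightarrow> real ^ 'd" and c :: "nat \<Rightarrow> 'a \<Rightarrow> real"
  assumes filtration: "\<forall>t<T. F t \<subseteq> F (Suc t)"
    and option: "american_option F T \<xi>"
    and stopping: "c \<in> mixed_stopping_times F T"
begin

lemma Phi_bg_shift_in_Psi_a:
  assumes "(y, c) \<in> Phi_bg F \<pi> T \<xi>"
  shows "(\<lambda>t \<omega>. if t \<le> T then y t \<omega> - payoff_before c \<xi> t \<omega> else 0)
           \<in> Psi_a F \<pi> T (\<lambda>\<omega>. - stopped_payoff T c \<xi> \<omega>)"
    (is "?z \<in> _")
proof -
  have y: "y \<in> strategies F T"
    and yK: "\<And>t. t \<le> T \<Longrightarrow> in_K F \<pi> t (\<lambda>\<omega>. y t \<omega> + c t \<omega> *\<^sub>R \<xi> t \<omega> - y (Suc t) \<omega>)"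
    using assms unfolding Phi_bg_def by auto
  have "meas F (t - 1) (\<lambda>\<omega>. - payoff_before c \<xi> t \<omega>)" if "t \<in> {1..T}" for t
    using payoff_before_predictable[OF filtration option stopping that] by (rule meas_uminus)
  then have "(\<lambda>t \<omega>. if t \<le> T then y t \<omega> + - payoff_before c \<xi> t \<omega> else 0) \<in> strategies F T"
    by (rule strategies_shift[OF y, rotated]) simp_all
  then have "?z \<in> strategies F T" by (simp only: diff_conv_add_uminus)
  moreover have "in_K F \<pi> t (\<lambda>\<omega>. ?z t \<omega> - ?z (Suc t) \<omega>)" if "t < T" for t
    using yK[of t] that by (simp add: payoff_before_Suc algebra_simps)
  moreover have "y (Suc T) \<omega> = 0" for \<omega>
    using y unfolding strategies_def by simp
  then have "in_K F \<pi> T (\<lambda>\<omega>. ?z T \<omega> - - stopped_payoff T c \<xi> \<omega>)"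
    using yK[of T] by (simp add: stopped_payoff_eq_payoff_before algebra_simps)
  ultimately show ?thesis unfolding Psi_a_def by blast
qed

lemma Psi_a_shift_in_Phi_bg:
  assumes "z \<in> Psi_a F \<pi> T (\<lambda>\<omega>. - stopped_payoff T c \<xi> \<omega>)"
  shows "((\<lambda>t \<omega>. if t \<le> T then z t \<omega> + payoff_before c \<xi> t \<omega> else 0), c) \<in> Phi_bg F \<pi> T \<xi>"
    (is "(?y, c) \<in> _")
proof -
  have z: "z \<in> strategies F T"
    and zK: "\<And>t. t < T \<Longrightarrow> in_K F \<pi> t (\<lambda>\<omega>. z t \<omega> - z (Suc t) \<omega>)"
    and zT: "in_K F \<pi> T (\<lambda>\<omega>. z T \<omega> - - stopped_payoff T c \<xi> \<omega>)"
    using assms unfolding Psi_a_def by auto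
  have "?y \<in> strategies F T"
    using strategies_shift[OF z] payoff_before_predictable[OF filtration option stopping] by simp
  moreover have "in_K F \<pi> t (\<lambda>\<omega>. ?y t \<omega> + c t \<omega> *\<^sub>R \<xi> t \<omega> - ?y (Suc t) \<omega>)" if "t \<le> T" for t
  proof (cases "t = T")
    case True
    then show ?thesis using zT by (simp add: stopped_payoff_eq_payoff_before algebra_simps)
  next
    case False
    then show ?thesis using zK[of t] that by (simp add: payoff_before_Suc algebra_simps)
  qed
  ultimately show ?thesis using stopping unfolding Phi_bg_def by blast
qed

end

theorem proposition5p5:
  fixes P :: "'a::finite \<Rightarrow> real"
    and F :: "nat \<Rightarrow> 'a set set"
    and T :: nat
    and \<pi> :: "nat \<Rightarrow> 'd::finite \<Rightarrow> 'd \<Rightarrow> 'a \<Rightarrow> real"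
    and \<xi> :: "nat \<Rightarrow> 'a \<Rightarrow> real ^ 'd"
    and c :: "nat \<Rightarrow> 'a \<Rightarrow> real"
  assumes "finite_filtered_space P F T"
    and "exchange_rates F T \<pi>"
    and "no_arbitrage F \<pi> T"
    and "american_option F T \<xi>"
    and "c \<in> mixed_stopping_times F T"
  shows "{- x | x :: real ^ 'd. \<exists>y. (y, c) \<in> Phi_bg F \<pi> T \<xi> \<and> (\<forall>\<omega>. y 0 \<omega> = x)}
       = {- x | x :: real ^ 'd. \<exists>z \<in> Psi_a F \<pi> T (\<lambda>\<omega>. - stopped_payoff T c \<xi> \<omega>). \<forall>\<omega>. z 0 \<omega> = x}"
proof -
  have filtration: "\<forall>t<T. F t \<subseteq> F (Suc t)"
    using assms(1) by (simp add: finite_filtered_space_def)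
  have "(\<exists>y. (y, c) \<in> Phi_bg F \<pi> T \<xi> \<and> (\<forall>\<omega>. y 0 \<omega> = x)) \<longleftrightarrow>
        (\<exists>z \<in> Psi_a F \<pi> T (\<lambda>\<omega>. - stopped_payoff T c \<xi> \<omega>). \<forall>\<omega>. z 0 \<omega> = x)" for x
  proof
    assume "\<exists>y. (y, c) \<in> Phi_bg F \<pi> T \<xi> \<and> (\<forall>\<omega>. y 0 \<omega> = x)"
    then obtain y where y: "(y, c) \<in> Phi_bg F \<pi> T \<xi>" "\<forall>\<omega>. y 0 \<omega> = x" by blast
    show "\<exists>z \<in> Psi_a F \<pi> T (\<lambda>\<omega>. - stopped_payoff T c \<xi> \<omega>). \<forall>\<omega>. z 0 \<omega> = x"
      by (rule bexI[OF _ Phi_bg_shift_in_Psi_a[OF filtration assms(4,5) y(1)]]) (simp add: y(2))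
  next
    assume "\<exists>z \<in> Psi_a F \<pi> T (\<lambda>\<omega>. - stopped_payoff T c \<xi> \<omega>). \<forall>\<omega>. z 0 \<omega> = x"
    then obtain z where z: "z \<in> Psi_a F \<pi> T (\<lambda>\<omega>. - stopped_payoff T c \<xi> \<omega>)" "\<forall>\<omega>. z 0 \<omega> = x"
      by blast
    show "\<exists>y. (y, c) \<in> Phi_bg F \<pi> T \<xi> \<and> (\<forall>\<omega>. y 0 \<omega> = x)"
      using Psi_a_shift_in_Phi_bg[OF filtration assms(4,5) z(1)] z(2) by auto
  qed
  then show ?thesis by simp
qed

end
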